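(* Let $R$ be a commutative ring with identity and $M$ a non-zero comultiplication $R$-module with $G'(M)$ non-null. (i) $G'(M)$ has a pendent vertex (a vertex with exactly one neighbour) if and only if $|\mathrm{Min}(M)|=2$ and $G'(M)$ is the disjoint union of two complete subgraphs $G'_1,G'_2$ with no edges between them such that $|V(G'_i)|=2$ for some $i\in\{1,2\}$. (ii) $G'(M)$ is not a star graph.
   Context: An $R$-module $M$ is a comultiplication module if for every submodule $N$ of $M$ there is an ideal $I$ of $R$ with $N=\mathrm{Ann}_M(I)$. A submodule $N$ of $M$ is large if $N\cap L\neq 0$ for every non-zero submodule $L$ of $M$. $\mathrm{Min}(M)$ is the set of minimal submodules of $M$. The large sum graph $G'(M)$ has as vertex set the set of all non-zero non-large submodules of $M$, and two distinct vertices $N,K$ are adjacent iff $N+K$ is non-large in $M$. A star graph is a complete bipartite graph $K_{1,n}$ (one part of size 1). *)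

theory Defs
  imports "HOL-Algebra.Module" "HOL-Algebra.AbelCoset" "HOL-Algebra.Ideal"
begin

definition ann_M :: "('a, 'b) ring_scheme \<Rightarrow> ('a, 'c, 'd) module_scheme \<Rightarrow> 'a set \<Rightarrow> 'c set" where
  "ann_M R M I = {m \<in> carrier M. \<forall>a\<in>I. a \<odot>\<^bsub>M\<^esub> m = \<zero>\<^bsub>M\<^esub>}"

definition comultiplication_module :: "('a, 'b) ring_scheme \<Rightarrow> ('a, 'c, 'd) module_scheme \<Rightarrow> bool" where
  "comultiplication_module R M \<longleftrightarrow> module R M \<and>
     (\<forall>N. submodule N R M \<longrightarrow> (\<exists>I. ideal I R \<and> N = ann_M R M I))"

definition large_submodule :: "('a, 'b) ring_scheme \<Rightarrow> ('a, 'c, 'd) module_scheme \<Rightarrow> 'c set \<Rightarrow> bool" where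
  "large_submodule R M N \<longleftrightarrow> submodule N R M \<and>
     (\<forall>L. submodule L R M \<and> L \<noteq> {\<zero>\<^bsub>M\<^esub>} \<longrightarrow> N \<inter> L \<noteq> {\<zero>\<^bsub>M\<^esub>})"

definition Min_sub :: "('a, 'b) ring_scheme \<Rightarrow> ('a, 'c, 'd) module_scheme \<Rightarrow> 'c set set" where
  "Min_sub R M = {N. submodule N R M \<and> N \<noteq> {\<zero>\<^bsub>M\<^esub>} \<and>
     (\<forall>L. submodule L R M \<and> L \<subseteq> N \<longrightarrow> L = {\<zero>\<^bsub>M\<^esub>} \<or> L = N)}"

definition LS_vertices :: "('a, 'b) ring_scheme \<Rightarrow> ('a, 'c, 'd) module_scheme \<Rightarrow> 'c set set" where
  "LS_vertices R M = {N. submodule N R M \<and> N \<noteq> {\<zero>\<^bsub>M\<^esub>} \<and> \<not> large_submodule R M N}"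

definition LS_adj :: "('a, 'b) ring_scheme \<Rightarrow> ('a, 'c, 'd) module_scheme \<Rightarrow> 'c set \<Rightarrow> 'c set \<Rightarrow> bool" where
  "LS_adj R M N K \<longleftrightarrow> N \<in> LS_vertices R M \<and> K \<in> LS_vertices R M \<and> N \<noteq> K \<and>
     \<not> large_submodule R M (set_add M N K)"

definition non_null_graph :: "'v set \<Rightarrow> bool" where
  "non_null_graph V \<longleftrightarrow> V \<noteq> {}"

definition pendent_vertex :: "'v set \<Rightarrow> ('v \<Rightarrow> 'v \<Rightarrow> bool) \<Rightarrow> 'v \<Rightarrow> bool" where
  "pendent_vertex V E v \<longleftrightarrow> v \<in> V \<and> (\<exists>!w. w \<in> V \<and> E v w)"

definition complete_on :: "'v set \<Rightarrow> ('v \<Rightarrow> 'v \<Rightarrow> bool) \<Rightarrow> bool" where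
  "complete_on A E \<longleftrightarrow> (\<forall>x\<in>A. \<forall>y\<in>A. x \<noteq> y \<longrightarrow> E x y)"

definition two_complete_components :: "'v set \<Rightarrow> ('v \<Rightarrow> 'v \<Rightarrow> bool) \<Rightarrow> 'v set \<Rightarrow> 'v set \<Rightarrow> bool" where
  "two_complete_components V E V1 V2 \<longleftrightarrow>
     V1 \<noteq> {} \<and> V2 \<noteq> {} \<and> V1 \<inter> V2 = {} \<and> V1 \<union> V2 = V \<and>
     complete_on V1 E \<and> complete_on V2 E \<and>
     (\<forall>x\<in>V1. \<forall>y\<in>V2. \<not> E x y \<and> \<not> E y x)"

definition star_graph :: "'v set \<Rightarrow> ('v \<Rightarrow> 'v \<Rightarrow> bool) \<Rightarrow> bool" where
  "star_graph V E \<longleftrightarrow> (\<exists>c\<in>V. V - {c} \<noteq> {} \<and>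
     (\<forall>x\<in>V - {c}. E c x \<and> E x c) \<and>
     (\<forall>x\<in>V - {c}. \<forall>y\<in>V - {c}. \<not> E x y))"

end

theory Submission
  imports Defs
begin

text \<open>In a comultiplication module every non-zero submodule contains a minimal one, and a minimal
  submodule S is prime for sums: S \<subseteq> X + Y forces S \<subseteq> X or S \<subseteq> Y. Hence a submodule is large
  iff it contains every minimal submodule. A pendent vertex v with neighbour w forces a chain
  S \<subset> T with S minimal and {v, w} = {S, T}; a minimal S' not below the non-large T then gives
  Min(M) = {S, S'}. The vertices therefore split into those containing S and those containing S',
  two cliques with no edges between them, and the clique of S is {S, T}. Conversely a two-element
  clique component consists of a pendent vertex and its neighbour. A star is impossible in any
  module, comultiplication or not.\<close>

context module begin

lemma submodule_zero: "submodule N R M \<Longrightarrow> \<zero>\<^bsub>M\<^esub> \<in> N"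
  using subgroup.one_closed[OF submodule.axioms(1)] by simp

lemma set_add_iff: "x \<in> set_add M N K \<longleftrightarrow> (\<exists>n\<in>N. \<exists>k\<in>K. x = n \<oplus>\<^bsub>M\<^esub> k)"
  unfolding set_add_def' by blast

lemma submodule_set_add:
  assumes N: "submodule N R M" and K: "submodule K R M"
  shows "submodule (set_add M N K) R M"
proof -
  have "additive_subgroup (set_add M N K) M"
    using add_additive_subgroups N K by (simp add: additive_subgroup_def submodule.axioms(1))
  moreover have "r \<odot>\<^bsub>M\<^esub> x \<in> set_add M N K" if r: "r \<in> carrier R" and "x \<in> set_add M N K" for r x
  proof -
    obtain n k where nk: "n \<in> N" "k \<in> K" "x = n \<oplus>\<^bsub>M\<^esub> k"
      using \<open>x \<in> set_add M N K\<close> by (auto simp: set_add_iff)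
    then have "r \<odot>\<^bsub>M\<^esub> x = r \<odot>\<^bsub>M\<^esub> n \<oplus>\<^bsub>M\<^esub> r \<odot>\<^bsub>M\<^esub> k"
      using r submoduleE(1)[OF N] submoduleE(1)[OF K] smult_r_distr by blast
    moreover have "r \<odot>\<^bsub>M\<^esub> n \<in> N" "r \<odot>\<^bsub>M\<^esub> k \<in> K"
      using r nk submoduleE(4)[OF N] submoduleE(4)[OF K] by auto
    ultimately show ?thesis
      unfolding set_add_iff by blast
  qed
  ultimately show ?thesis
    by (simp add: submodule.intro submodule_axioms.intro additive_subgroup_def)
qed

lemma set_add_commute:
  assumes "N \<subseteq> carrier M" "K \<subseteq> carrier M"
  shows "set_add M N K = set_add M K N"
  using assms M.a_comm by (auto simp: set_add_iff) (metis subsetD)+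

lemma set_add_upper1:
  assumes "N \<subseteq> carrier M" "submodule K R M" shows "N \<subseteq> set_add M N K"
  using assms submodule_zero by (force simp: set_add_iff)

lemma set_add_upper2:
  assumes "submodule N R M" "K \<subseteq> carrier M" shows "K \<subseteq> set_add M N K"
  using set_add_upper1[OF assms(2,1)] set_add_commute[OF submoduleE(1)[OF assms(1)] assms(2)]
  by simp

lemma set_add_least: "submodule X R M \<Longrightarrow> N \<subseteq> X \<Longrightarrow> K \<subseteq> X \<Longrightarrow> set_add M N K \<subseteq> X"
  using submoduleE(5) by (force simp: set_add_iff)

lemma set_add_absorb:
  assumes "submodule X R M" "submodule Y R M" "Y \<subseteq> X"
  shows "set_add M X Y = X" "set_add M Y X = X"
proof -
  have "X \<subseteq> carrier M" "Y \<subseteq> carrier M" using assms(1,2) submoduleE(1) by auto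
  then show "set_add M X Y = X"
    using set_add_least[OF assms(1) order_refl assms(3)] set_add_upper1 assms(2) by blast
  then show "set_add M Y X = X"
    using set_add_commute \<open>X \<subseteq> carrier M\<close> \<open>Y \<subseteq> carrier M\<close> by simp
qed

lemma submodule_Int: "submodule N R M \<Longrightarrow> submodule K R M \<Longrightarrow> submodule (N \<inter> K) R M"
  by (rule submoduleI) (use submoduleE(1,3,4,5) submodule_zero in auto)

lemma submodule_cyclic:
  assumes z: "z \<in> carrier M"
  shows "submodule ((\<lambda>a. a \<odot>\<^bsub>M\<^esub> z) ` carrier R) R M"
proof (rule submoduleI)
  show "(\<lambda>a. a \<odot>\<^bsub>M\<^esub> z) ` carrier R \<subseteq> carrier M" using z by auto
  have "\<zero>\<^bsub>M\<^esub> = \<zero>\<^bsub>R\<^esub> \<odot>\<^bsub>M\<^esub> z" using z by simp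
  thus "\<zero>\<^bsub>M\<^esub> \<in> (\<lambda>a. a \<odot>\<^bsub>M\<^esub> z) ` carrier R" by blast
  show "\<ominus>\<^bsub>M\<^esub> x \<in> (\<lambda>a. a \<odot>\<^bsub>M\<^esub> z) ` carrier R" if "x \<in> (\<lambda>a. a \<odot>\<^bsub>M\<^esub> z) ` carrier R" for x
  proof -
    from that obtain a where a: "a \<in> carrier R" "x = a \<odot>\<^bsub>M\<^esub> z" by blast
    hence "\<ominus>\<^bsub>M\<^esub> x = (\<ominus>\<^bsub>R\<^esub> a) \<odot>\<^bsub>M\<^esub> z" using z smult_l_minus by simp
    moreover have "\<ominus>\<^bsub>R\<^esub> a \<in> carrier R" using a by simp
    ultimately show ?thesis by blast
  qed
  show "x \<oplus>\<^bsub>M\<^esub> y \<in> (\<lambda>a. a \<odot>\<^bsub>M\<^esub> z) ` carrier R"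
    if "x \<in> (\<lambda>a. a \<odot>\<^bsub>M\<^esub> z) ` carrier R" "y \<in> (\<lambda>a. a \<odot>\<^bsub>M\<^esub> z) ` carrier R" for x y
  proof -
    from that obtain a b where a: "a \<in> carrier R" "x = a \<odot>\<^bsub>M\<^esub> z" "b \<in> carrier R" "y = b \<odot>\<^bsub>M\<^esub> z" by blast
    hence "x \<oplus>\<^bsub>M\<^esub> y = (a \<oplus>\<^bsub>R\<^esub> b) \<odot>\<^bsub>M\<^esub> z" using z smult_l_distr by simp
    moreover have "a \<oplus>\<^bsub>R\<^esub> b \<in> carrier R" using a by simp
    ultimately show ?thesis by blast
  qed
  show "r \<odot>\<^bsub>M\<^esub> x \<in> (\<lambda>a. a \<odot>\<^bsub>M\<^esub> z) ` carrier R" if "r \<in> carrier R" "x \<in> (\<lambda>a. a \<odot>\<^bsub>M\<^esub> z) ` carrier R" for r x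
  proof -
    from that obtain a where a: "a \<in> carrier R" "x = a \<odot>\<^bsub>M\<^esub> z" by blast
    hence "r \<odot>\<^bsub>M\<^esub> x = (r \<otimes>\<^bsub>R\<^esub> a) \<odot>\<^bsub>M\<^esub> z" using z that(1) smult_assoc1 by simp
    moreover have "r \<otimes>\<^bsub>R\<^esub> a \<in> carrier R" using a that(1) by simp
    ultimately show ?thesis by blast
  qed
qed

lemma submodule_smult_image:
  assumes N: "submodule N R M" and a: "a \<in> carrier R"
  shows "submodule ((\<lambda>u. a \<odot>\<^bsub>M\<^esub> u) ` N) R M"
proof (rule submoduleI)
  note sN = submoduleE(1)[OF N]
  show "(\<lambda>u. a \<odot>\<^bsub>M\<^esub> u) ` N \<subseteq> carrier M" using sN a by auto
  have "\<zero>\<^bsub>M\<^esub> = a \<odot>\<^bsub>M\<^esub> \<zero>\<^bsub>M\<^esub>" using a by simp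
  thus "\<zero>\<^bsub>M\<^esub> \<in> (\<lambda>u. a \<odot>\<^bsub>M\<^esub> u) ` N" using submodule_zero[OF N] by blast
  show "\<ominus>\<^bsub>M\<^esub> x \<in> (\<lambda>u. a \<odot>\<^bsub>M\<^esub> u) ` N" if "x \<in> (\<lambda>u. a \<odot>\<^bsub>M\<^esub> u) ` N" for x
  proof -
    from that obtain u where u: "u \<in> N" "x = a \<odot>\<^bsub>M\<^esub> u" by blast
    hence "\<ominus>\<^bsub>M\<^esub> x = a \<odot>\<^bsub>M\<^esub> (\<ominus>\<^bsub>M\<^esub> u)" using a sN smult_r_minus by auto
    thus ?thesis using submoduleE(3)[OF N u(1)] by blast
  qed
  show "x \<oplus>\<^bsub>M\<^esub> y \<in> (\<lambda>u. a \<odot>\<^bsub>M\<^esub> u) ` N"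
    if "x \<in> (\<lambda>u. a \<odot>\<^bsub>M\<^esub> u) ` N" "y \<in> (\<lambda>u. a \<odot>\<^bsub>M\<^esub> u) ` N" for x y
  proof -
    from that obtain u v where u: "u \<in> N" "x = a \<odot>\<^bsub>M\<^esub> u" "v \<in> N" "y = a \<odot>\<^bsub>M\<^esub> v" by blast
    hence "x \<oplus>\<^bsub>M\<^esub> y = a \<odot>\<^bsub>M\<^esub> (u \<oplus>\<^bsub>M\<^esub> v)" using a subsetD[OF sN u(1)] subsetD[OF sN u(3)] smult_r_distr[of a u v] by simp
    thus ?thesis using submoduleE(5)[OF N u(1) u(3)] by blast
  qed
  show "r \<odot>\<^bsub>M\<^esub> x \<in> (\<lambda>u. a \<odot>\<^bsub>M\<^esub> u) ` N" if "r \<in> carrier R" "x \<in> (\<lambda>u. a \<odot>\<^bsub>M\<^esub> u) ` N" for r x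
  proof -
    from that obtain u where u: "u \<in> N" "x = a \<odot>\<^bsub>M\<^esub> u" by auto
    have "r \<odot>\<^bsub>M\<^esub> x = (r \<otimes>\<^bsub>R\<^esub> a) \<odot>\<^bsub>M\<^esub> u" using u that(1) a sN smult_assoc1 by auto
    also have "\<dots> = (a \<otimes>\<^bsub>R\<^esub> r) \<odot>\<^bsub>M\<^esub> u" using that(1) a R.m_comm by simp
    also have "\<dots> = a \<odot>\<^bsub>M\<^esub> (r \<odot>\<^bsub>M\<^esub> u)" using u that(1) a sN smult_assoc1 by auto
    finally show ?thesis using submoduleE(4)[OF N that(1) u(1)] by blast
  qed
qed

lemma submodule_Union_chain:
  assumes "C \<noteq> {}" and sub: "\<And>X. X \<in> C \<Longrightarrow> submodule X R M"
    and chain: "\<And>X Y. X \<in> C \<Longrightarrow> Y \<in> C \<Longrightarrow> X \<subseteq> Y \<or> Y \<subseteq> X"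
  shows "submodule (\<Union>C) R M"
proof (rule submoduleI)
  show "\<Union>C \<subseteq> carrier M" using sub submoduleE(1) by blast
  show "\<zero>\<^bsub>M\<^esub> \<in> \<Union>C" using \<open>C \<noteq> {}\<close> sub submodule_zero by blast
  show "\<ominus>\<^bsub>M\<^esub> a \<in> \<Union>C" if "a \<in> \<Union>C" for a using that sub submoduleE(3) by blast
  show "r \<odot>\<^bsub>M\<^esub> a \<in> \<Union>C" if "r \<in> carrier R" "a \<in> \<Union>C" for r a
    using that sub submoduleE(4) by blast
  show "a \<oplus>\<^bsub>M\<^esub> b \<in> \<Union>C" if "a \<in> \<Union>C" "b \<in> \<Union>C" for a b
  proof -
    from that obtain X Y where "X \<in> C" "Y \<in> C" "a \<in> X" "b \<in> Y" by blast
    then show ?thesis using chain[of X Y] sub submoduleE(5) by blast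
  qed
qed


lemma Min_subD:
  assumes "S \<in> Min_sub R M" shows "submodule S R M" "S \<noteq> {\<zero>\<^bsub>M\<^esub>}"
  using assms unfolding Min_sub_def by auto

lemma Min_sub_minimal:
  "S \<in> Min_sub R M \<Longrightarrow> submodule L R M \<Longrightarrow> L \<subseteq> S \<Longrightarrow> L \<noteq> {\<zero>\<^bsub>M\<^esub>} \<Longrightarrow> L = S"
  unfolding Min_sub_def by blast

lemma Min_sub_smult_image:
  assumes S: "S \<in> Min_sub R M" and a: "a \<in> carrier R" and s: "s \<in> S" "a \<odot>\<^bsub>M\<^esub> s \<noteq> \<zero>\<^bsub>M\<^esub>"
  shows "(\<lambda>u. a \<odot>\<^bsub>M\<^esub> u) ` S = S"
proof (rule Min_sub_minimal[OF S submodule_smult_image[OF Min_subD(1)[OF S] a]])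
  show "(\<lambda>u. a \<odot>\<^bsub>M\<^esub> u) ` S \<subseteq> S" using submoduleE(4)[OF Min_subD(1)[OF S] a] by blast
  show "(\<lambda>u. a \<odot>\<^bsub>M\<^esub> u) ` S \<noteq> {\<zero>\<^bsub>M\<^esub>}" using s by blast
qed

text \<open>If a in the annihilating ideal of X moves some s \<in> S, then aS = S by minimality, so every
  t \<in> S has the form a(h + k) = ak with h \<in> X, k \<in> Y, which the annihilating ideal of Y kills.\<close>

lemma Min_sub_subset_set_addD:
  assumes C: "comultiplication_module R M" and S: "S \<in> Min_sub R M"
    and X: "submodule X R M" and Y: "submodule Y R M" and sub: "S \<subseteq> set_add M X Y"
  shows "S \<subseteq> X \<or> S \<subseteq> Y"
proof (rule ccontr)
  assume "\<not> (S \<subseteq> X \<or> S \<subseteq> Y)"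
  then obtain s t where s: "s \<in> S" "s \<notin> X" and t: "t \<in> S" "t \<notin> Y" by blast
  have sS: "S \<subseteq> carrier M" using submoduleE(1)[OF Min_subD(1)[OF S]] .
  obtain I where I: "ideal I R" "X = ann_M R M I" using C X unfolding comultiplication_module_def by blast
  obtain J where J: "ideal J R" "Y = ann_M R M J" using C Y unfolding comultiplication_module_def by blast
  obtain a where a: "a \<in> I" "a \<odot>\<^bsub>M\<^esub> s \<noteq> \<zero>\<^bsub>M\<^esub>" using s I(2) sS unfolding ann_M_def by blast
  obtain b where b: "b \<in> J" "b \<odot>\<^bsub>M\<^esub> t \<noteq> \<zero>\<^bsub>M\<^esub>" using t J(2) sS unfolding ann_M_def by blast
  have aR: "a \<in> carrier R" using ideal.Icarr[OF I(1) a(1)] .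
  have bR: "b \<in> carrier R" using ideal.Icarr[OF J(1) b(1)] .
  obtain u where "u \<in> S" "t = a \<odot>\<^bsub>M\<^esub> u"
    using t(1) Min_sub_smult_image[OF S aR s(1) a(2)] by blast
  moreover obtain h k where hk: "u = h \<oplus>\<^bsub>M\<^esub> k" "h \<in> X" "k \<in> Y"
    using subsetD[OF sub \<open>u \<in> S\<close>] unfolding set_add_iff by blast
  moreover have hc: "h \<in> carrier M" and kc: "k \<in> carrier M"
    using hk submoduleE(1)[OF X] submoduleE(1)[OF Y] by auto
  moreover have "a \<odot>\<^bsub>M\<^esub> h = \<zero>\<^bsub>M\<^esub>" using hk(2) I(2) a(1) unfolding ann_M_def by blast
  moreover have bk: "b \<odot>\<^bsub>M\<^esub> k = \<zero>\<^bsub>M\<^esub>" using hk(3) J(2) b(1) unfolding ann_M_def by blast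
  ultimately have "b \<odot>\<^bsub>M\<^esub> t = b \<odot>\<^bsub>M\<^esub> (a \<odot>\<^bsub>M\<^esub> k)"
    using aR smult_r_distr by simp
  also have "\<dots> = a \<odot>\<^bsub>M\<^esub> (b \<odot>\<^bsub>M\<^esub> k)" using aR bR kc smult_assoc1 R.m_comm by metis
  also have "\<dots> = \<zero>\<^bsub>M\<^esub>" using bk aR by simp
  finally show False using b(2) by blast
qed

lemma exists_maximal_submodule_avoiding:
  assumes "x \<noteq> \<zero>\<^bsub>M\<^esub>"
  shows "\<exists>P. submodule P R M \<and> x \<notin> P \<and> (\<forall>Q. submodule Q R M \<and> x \<notin> Q \<and> P \<subseteq> Q \<longrightarrow> Q = P)"
proof -
  define A where "A = {P. submodule P R M \<and> x \<notin> P}"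
  have "\<exists>P\<in>A. \<forall>Q\<in>A. P \<subseteq> Q \<longrightarrow> Q = P"
  proof (rule subset_Zorn)
    fix C assume C: "subset.chain A C"
    show "\<exists>U\<in>A. \<forall>X\<in>C. X \<subseteq> U"
    proof (cases "C = {}")
      case True
      have "submodule {\<zero>\<^bsub>M\<^esub>} R M" by (rule submoduleI) auto
      then show ?thesis using True assms unfolding A_def by blast
    next
      case False
      have "submodule (\<Union>C) R M"
        using C submodule_Union_chain[OF False] unfolding subset_chain_def A_def by blast
      moreover have "x \<notin> \<Union>C" using C unfolding subset_chain_def A_def by blast
      ultimately show ?thesis unfolding A_def by blast
    qed
  qed
  then show ?thesis unfolding A_def by blast
qed

lemma cyclic_self: "z \<in> carrier M \<Longrightarrow> z \<in> (\<lambda>a. a \<odot>\<^bsub>M\<^esub> z) ` carrier R"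
  using smult_one by (metis R.one_closed image_eqI)

text \<open>Here y = b(rx) forces rx \<notin> P, so by maximality of P the submodule P + R(rx) contains x;
  applying b, which kills P, yields bx \<in> Ry.\<close>

lemma maximal_avoiding_regenerates:
  assumes I: "ideal I R" and P: "submodule P R M" "P = ann_M R M I" and x: "x \<in> carrier M"
    and max: "\<And>Q. submodule Q R M \<Longrightarrow> x \<notin> Q \<Longrightarrow> P \<subseteq> Q \<Longrightarrow> Q = P"
    and b: "b \<in> I" and r: "r \<in> carrier R"
    and y: "y = r \<odot>\<^bsub>M\<^esub> (b \<odot>\<^bsub>M\<^esub> x)" "y \<noteq> \<zero>\<^bsub>M\<^esub>"
  shows "b \<odot>\<^bsub>M\<^esub> x \<in> (\<lambda>a. a \<odot>\<^bsub>M\<^esub> y) ` carrier R"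
proof -
  have bR: "b \<in> carrier R" using ideal.Icarr[OF I b] .
  have kill: "b \<odot>\<^bsub>M\<^esub> p = \<zero>\<^bsub>M\<^esub>" if "p \<in> P" for p using that P(2) b unfolding ann_M_def by blast
  define rx where "rx = r \<odot>\<^bsub>M\<^esub> x"
  have rxc: "rx \<in> carrier M" using r x rx_def by simp
  have brx: "b \<odot>\<^bsub>M\<^esub> rx = y"
    using r bR x y(1) unfolding rx_def by (metis smult_assoc1 R.m_comm)
  have "rx \<notin> P" using kill brx y(2) by blast
  define Q where "Q = set_add M P ((\<lambda>a. a \<odot>\<^bsub>M\<^esub> rx) ` carrier R)"
  have Csm: "submodule ((\<lambda>a. a \<odot>\<^bsub>M\<^esub> rx) ` carrier R) R M" using submodule_cyclic[OF rxc] .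
  have "rx \<in> Q"
    unfolding Q_def using cyclic_self[OF rxc] set_add_upper2[OF P(1) submoduleE(1)[OF Csm]] by blast
  moreover have "submodule Q R M" "P \<subseteq> Q"
    unfolding Q_def using submodule_set_add[OF P(1) Csm] set_add_upper1[OF submoduleE(1)[OF P(1)] Csm]
    by auto
  ultimately have "x \<in> Q" using max \<open>rx \<notin> P\<close> by blast
  then obtain p s where ps: "x = p \<oplus>\<^bsub>M\<^esub> s \<odot>\<^bsub>M\<^esub> rx" "p \<in> P" "s \<in> carrier R"
    unfolding Q_def set_add_iff by blast
  have pc: "p \<in> carrier M" using ps(2) submoduleE(1)[OF P(1)] by blast
  have "b \<odot>\<^bsub>M\<^esub> x = b \<odot>\<^bsub>M\<^esub> p \<oplus>\<^bsub>M\<^esub> b \<odot>\<^bsub>M\<^esub> (s \<odot>\<^bsub>M\<^esub> rx)"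
    using ps(1) bR pc ps(3) rxc smult_r_distr by simp
  also have "\<dots> = b \<odot>\<^bsub>M\<^esub> (s \<odot>\<^bsub>M\<^esub> rx)" using kill[OF ps(2)] bR ps(3) rxc by simp
  also have "\<dots> = s \<odot>\<^bsub>M\<^esub> y" using bR ps(3) rxc brx by (metis smult_assoc1 R.m_comm)
  finally show ?thesis using ps(3) by blast
qed

lemma cyclic_in_Min_sub:
  assumes I: "ideal I R" and P: "submodule P R M" "P = ann_M R M I" and x: "x \<in> carrier M"
    and max: "\<And>Q. submodule Q R M \<Longrightarrow> x \<notin> Q \<Longrightarrow> P \<subseteq> Q \<Longrightarrow> Q = P"
    and b: "b \<in> I" "b \<odot>\<^bsub>M\<^esub> x \<noteq> \<zero>\<^bsub>M\<^esub>"
  shows "(\<lambda>a. a \<odot>\<^bsub>M\<^esub> (b \<odot>\<^bsub>M\<^esub> x)) ` carrier R \<in> Min_sub R M"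
proof -
  define z where "z = b \<odot>\<^bsub>M\<^esub> x"
  define S where "S = (\<lambda>a. a \<odot>\<^bsub>M\<^esub> z) ` carrier R"
  have zc: "z \<in> carrier M" using ideal.Icarr[OF I b(1)] x z_def by simp
  have "S \<in> Min_sub R M" unfolding Min_sub_def
  proof (intro CollectI conjI allI impI)
    show "submodule S R M" using submodule_cyclic[OF zc] S_def by simp
    show "S \<noteq> {\<zero>\<^bsub>M\<^esub>}" using cyclic_self[OF zc] b(2) z_def S_def by auto
    fix L assume L: "submodule L R M \<and> L \<subseteq> S"
    show "L = {\<zero>\<^bsub>M\<^esub>} \<or> L = S"
    proof (cases "L = {\<zero>\<^bsub>M\<^esub>}")
      case False
      then obtain y where y: "y \<in> L" "y \<noteq> \<zero>\<^bsub>M\<^esub>" using L submodule_zero by blast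
      then obtain r where r: "r \<in> carrier R" "y = r \<odot>\<^bsub>M\<^esub> z" using L unfolding S_def by blast
      have "z \<in> (\<lambda>a. a \<odot>\<^bsub>M\<^esub> y) ` carrier R"
        using maximal_avoiding_regenerates[OF I P x max b(1) r(1) _ y(2)] r(2) unfolding z_def by blast
      then have "z \<in> L" using y(1) L submoduleE(4) by blast
      then have "S \<subseteq> L" unfolding S_def using L submoduleE(4) by blast
      then show ?thesis using L by blast
    qed simp
  qed
  then show ?thesis unfolding S_def z_def .
qed

lemma comultiplication_exists_Min_sub:
  assumes C: "comultiplication_module R M" and N: "submodule N R M" "N \<noteq> {\<zero>\<^bsub>M\<^esub>}"
  shows "\<exists>S\<in>Min_sub R M. S \<subseteq> N"
proof -
  obtain x where x: "x \<in> N" "x \<noteq> \<zero>\<^bsub>M\<^esub>" using N submodule_zero by blast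
  have xc: "x \<in> carrier M" using x(1) submoduleE(1)[OF N(1)] by blast
  obtain P where P: "submodule P R M" "x \<notin> P"
    and max: "\<And>Q. submodule Q R M \<Longrightarrow> x \<notin> Q \<Longrightarrow> P \<subseteq> Q \<Longrightarrow> Q = P"
    using exists_maximal_submodule_avoiding[OF x(2)] by blast
  obtain I where I: "ideal I R" "P = ann_M R M I" using C P(1) unfolding comultiplication_module_def by blast
  obtain b where b: "b \<in> I" "b \<odot>\<^bsub>M\<^esub> x \<noteq> \<zero>\<^bsub>M\<^esub>" using P(2) xc I(2) unfolding ann_M_def by blast
  have "b \<odot>\<^bsub>M\<^esub> x \<in> N" using submoduleE(4)[OF N(1) ideal.Icarr[OF I(1) b(1)] x(1)] .
  then have "(\<lambda>a. a \<odot>\<^bsub>M\<^esub> (b \<odot>\<^bsub>M\<^esub> x)) ` carrier R \<subseteq> N" using submoduleE(4)[OF N(1)] by blast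
  then show ?thesis using cyclic_in_Min_sub[OF I(1) P(1) I(2) xc max b] by blast
qed

lemma large_submodule_iff_Min_sub:
  assumes C: "comultiplication_module R M" and N: "submodule N R M"
  shows "large_submodule R M N \<longleftrightarrow> (\<forall>S\<in>Min_sub R M. S \<subseteq> N)"
proof
  assume large: "large_submodule R M N"
  show "\<forall>S\<in>Min_sub R M. S \<subseteq> N"
  proof
    fix S assume S: "S \<in> Min_sub R M"
    then have "N \<inter> S \<noteq> {\<zero>\<^bsub>M\<^esub>}" using large Min_subD unfolding large_submodule_def by blast
    then have "N \<inter> S = S" using Min_sub_minimal[OF S submodule_Int[OF N Min_subD(1)[OF S]]] by blast
    then show "S \<subseteq> N" by blast
  qed
next
  assume all: "\<forall>S\<in>Min_sub R M. S \<subseteq> N"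
  show "large_submodule R M N" unfolding large_submodule_def
  proof (intro conjI N allI impI)
    fix L assume L: "submodule L R M \<and> L \<noteq> {\<zero>\<^bsub>M\<^esub>}"
    then obtain S where S: "S \<in> Min_sub R M" "S \<subseteq> L" using comultiplication_exists_Min_sub[OF C] by blast
    then have "S \<subseteq> N \<inter> L" using all by blast
    then show "N \<inter> L \<noteq> {\<zero>\<^bsub>M\<^esub>}" using Min_subD[OF S(1)] submodule_zero by blast
  qed
qed

lemma not_large_submodule_mono:
  assumes "submodule N R M" "N \<subseteq> K" "\<not> large_submodule R M K" "submodule K R M"
  shows "\<not> large_submodule R M N"
proof
  assume "large_submodule R M N"
  then have "K \<inter> L \<noteq> {\<zero>\<^bsub>M\<^esub>}" if "submodule L R M" "L \<noteq> {\<zero>\<^bsub>M\<^esub>}" for L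
    using that assms(1,2) submodule_zero unfolding large_submodule_def by blast
  then show False using assms(3,4) unfolding large_submodule_def by blast
qed


lemma LS_verticesD:
  assumes "X \<in> LS_vertices R M"
  shows "submodule X R M" "X \<noteq> {\<zero>\<^bsub>M\<^esub>}" "\<not> large_submodule R M X"
  using assms unfolding LS_vertices_def by auto

lemma LS_vertices_subset:
  assumes "X \<in> LS_vertices R M" "submodule Y R M" "Y \<subseteq> X" "Y \<noteq> {\<zero>\<^bsub>M\<^esub>}"
  shows "Y \<in> LS_vertices R M"
  using assms not_large_submodule_mono[OF assms(2,3)] LS_verticesD[OF assms(1)]
  unfolding LS_vertices_def by blast

lemma LS_adj_of_subset:
  assumes "X \<in> LS_vertices R M" "Y \<in> LS_vertices R M" "Y \<subseteq> X" "Y \<noteq> X"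
  shows "LS_adj R M X Y" "LS_adj R M Y X"
proof -
  have "set_add M X Y = X" "set_add M Y X = X"
    using set_add_absorb[OF LS_verticesD(1)[OF assms(1)] LS_verticesD(1)[OF assms(2)] assms(3)] by auto
  then show "LS_adj R M X Y" "LS_adj R M Y X"
    using assms(1,2,4) LS_verticesD(3)[OF assms(1)] unfolding LS_adj_def by simp_all
qed

lemma LS_adj_sym:
  assumes "LS_adj R M X Y" shows "LS_adj R M Y X"
proof -
  have "set_add M X Y = set_add M Y X"
    using assms LS_verticesD(1) submoduleE(1) set_add_commute unfolding LS_adj_def by meson
  then show ?thesis using assms unfolding LS_adj_def by auto
qed

lemma LS_adj_set_add:
  assumes "LS_adj R M X Y"
  shows "set_add M X Y \<in> LS_vertices R M" "X \<subseteq> set_add M X Y" "Y \<subseteq> set_add M X Y"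
proof -
  have X: "submodule X R M" "X \<noteq> {\<zero>\<^bsub>M\<^esub>}" and Y: "submodule Y R M"
    using assms LS_verticesD unfolding LS_adj_def by auto
  show "X \<subseteq> set_add M X Y" using set_add_upper1[OF submoduleE(1)[OF X(1)] Y] .
  show "Y \<subseteq> set_add M X Y" using set_add_upper2[OF X(1) submoduleE(1)[OF Y]] .
  then show "set_add M X Y \<in> LS_vertices R M"
    using assms submodule_set_add[OF X(1) Y] \<open>X \<subseteq> set_add M X Y\<close> X(2) submodule_zero[OF X(1)]
    unfolding LS_adj_def LS_vertices_def by blast
qed

text \<open>A vertex c is non-large, so some vertex L meets it trivially; then c + L is a third vertex
  adjacent to L, which a star with centre c forbids.\<close>

lemma LS_not_star_graph: "\<not> star_graph (LS_vertices R M) (LS_adj R M)"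
proof
  assume "star_graph (LS_vertices R M) (LS_adj R M)"
  then obtain c where c: "c \<in> LS_vertices R M"
    and centre: "\<And>x. x \<in> LS_vertices R M - {c} \<Longrightarrow> LS_adj R M c x"
    and leaves: "\<And>x y. x \<in> LS_vertices R M - {c} \<Longrightarrow> y \<in> LS_vertices R M - {c} \<Longrightarrow> \<not> LS_adj R M x y"
    unfolding star_graph_def by blast
  obtain L where L: "submodule L R M" "L \<noteq> {\<zero>\<^bsub>M\<^esub>}" "c \<inter> L = {\<zero>\<^bsub>M\<^esub>}"
    using LS_verticesD[OF c] unfolding large_submodule_def by blast
  have "\<not> large_submodule R M L"
    using L(3) LS_verticesD(1,2)[OF c] unfolding large_submodule_def by blast
  then have Lv: "L \<in> LS_vertices R M" using L unfolding LS_vertices_def by blast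
  have "L \<noteq> c" using L LS_verticesD(2)[OF c] by auto
  then have adj: "LS_adj R M c L" using centre Lv by blast
  define U where "U = set_add M c L"
  have Uv: "U \<in> LS_vertices R M" and cU: "c \<subseteq> U" and LU: "L \<subseteq> U"
    using LS_adj_set_add[OF adj] unfolding U_def by auto
  have "U \<noteq> L" using cU L(3) LS_verticesD(2)[OF c] by blast
  moreover have "U \<noteq> c" using LU L(2,3) by blast
  ultimately show False using leaves[of L U] LS_adj_of_subset(2)[OF Uv Lv LU] Lv Uv \<open>L \<noteq> c\<close> by blast
qed

lemma pendent_vertex_LS_chain:
  assumes "pendent_vertex (LS_vertices R M) (LS_adj R M) v"
  obtains S T where "S \<in> Min_sub R M" "T \<in> LS_vertices R M" "S \<subset> T" "v \<in> {S, T}"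
    "\<And>X. X \<in> LS_vertices R M \<Longrightarrow> LS_adj R M v X \<Longrightarrow> X \<in> {S, T}"
proof -
  let ?V = "LS_vertices R M"
  obtain w where v: "v \<in> ?V" and w: "w \<in> ?V" "LS_adj R M v w"
    and uniq: "\<And>u. u \<in> ?V \<Longrightarrow> LS_adj R M v u \<Longrightarrow> u = w"
    using assms unfolding pendent_vertex_def by blast
  have "v \<noteq> w" using w(2) unfolding LS_adj_def by blast
  \<comment> \<open>Proper non-zero submodules of v, and v + w unless it is v, are neighbours of v, hence equal w.\<close>
  show ?thesis
  proof (cases "v \<in> Min_sub R M")
    case True
    have "set_add M v w \<noteq> v"
    proof
      assume "set_add M v w = v"
      then have "w \<subseteq> v" using LS_adj_set_add(3)[OF w(2)] by simp
      then have "w = v"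
        using Min_sub_minimal[OF True LS_verticesD(1)[OF w(1)] _ LS_verticesD(2)[OF w(1)]] by simp
      then show False using \<open>v \<noteq> w\<close> by simp
    qed
    then have "set_add M v w = w"
      using uniq LS_adj_of_subset(2) LS_adj_set_add[OF w(2)] v by metis
    then have "v \<subset> w" using LS_adj_set_add(2)[OF w(2)] \<open>v \<noteq> w\<close> by auto
    then show ?thesis using that[OF True w(1)] uniq by blast
  next
    case False
    then obtain X where X: "submodule X R M" "X \<subseteq> v" "X \<noteq> {\<zero>\<^bsub>M\<^esub>}" "X \<noteq> v"
      using LS_verticesD(1,2)[OF v] unfolding Min_sub_def by blast
    have "X = w" using uniq LS_vertices_subset[OF v X(1-3)] LS_adj_of_subset(1)[OF v _ X(2,4)] by blast
    have "w \<in> Min_sub R M"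
      unfolding Min_sub_def
    proof (intro CollectI conjI allI impI LS_verticesD(1,2)[OF w(1)])
      fix L assume L: "submodule L R M \<and> L \<subseteq> w"
      show "L = {\<zero>\<^bsub>M\<^esub>} \<or> L = w"
      proof (cases "L = {\<zero>\<^bsub>M\<^esub>}")
        case False
        have "L \<subset> v" using L X(2,4) \<open>X = w\<close> by blast
        then show ?thesis using uniq LS_vertices_subset[OF v] LS_adj_of_subset(1)[OF v] L False by blast
      qed simp
    qed
    then show ?thesis using that v uniq X(2,4) \<open>X = w\<close> by blast
  qed
qed


lemma Min_sub_subset_chain_eq:
  assumes S: "S \<in> Min_sub R M" and T: "T \<in> LS_vertices R M" and ST: "S \<subset> T" and v: "v \<in> {S, T}"
    and nbrs: "\<And>X. X \<in> LS_vertices R M \<Longrightarrow> LS_adj R M v X \<Longrightarrow> X \<in> {S, T}"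
    and S'': "S'' \<in> Min_sub R M" "S'' \<subseteq> T"
  shows "S'' = S"
proof -
  note Ssm = Min_subD[OF S] and S''sm = Min_subD[OF S''(1)] and Tsm = LS_verticesD[OF T]
  have vV: "v \<in> LS_vertices R M" using v T LS_vertices_subset[OF T Ssm(1)] ST Ssm(2) by blast
  have S''V: "S'' \<in> LS_vertices R M" using LS_vertices_subset[OF T S''sm(1) S''(2) S''sm(2)] .
  have "set_add M v S'' \<subseteq> T" using set_add_least[OF Tsm(1)] v ST S''(2) by blast
  then have "\<not> large_submodule R M (set_add M v S'')"
    using not_large_submodule_mono submodule_set_add[OF LS_verticesD(1)[OF vV] S''sm(1)] Tsm(1,3)
    by blast
  then have "S'' = v \<or> LS_adj R M v S''" using vV S''V unfolding LS_adj_def by blast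
  moreover have "S'' \<noteq> T" using Min_sub_minimal[OF S''(1) Ssm(1) _ Ssm(2)] ST by blast
  ultimately show ?thesis using nbrs[OF S''V] v by blast
qed

lemma comultiplication_Min_sub_pair:
  assumes C: "comultiplication_module R M" and S: "S \<in> Min_sub R M"
    and T: "T \<in> LS_vertices R M" and ST: "S \<subset> T" and v: "v \<in> {S, T}"
    and nbrs: "\<And>X. X \<in> LS_vertices R M \<Longrightarrow> LS_adj R M v X \<Longrightarrow> X \<in> {S, T}"
  obtains S' where "S' \<noteq> S" "Min_sub R M = {S, S'}"
proof -
  let ?V = "LS_vertices R M"
  note Ssm = Min_subD[OF S] and Tsm = LS_verticesD[OF T]
  have vV: "v \<in> ?V" using v T LS_vertices_subset[OF T Ssm(1)] ST Ssm(2) by blast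
  obtain S' where S': "S' \<in> Min_sub R M" "\<not> S' \<subseteq> T"
    using Tsm large_submodule_iff_Min_sub[OF C Tsm(1)] by blast
  note S'sm = Min_subD[OF S'(1)]
  have "\<not> large_submodule R M S'"
  proof
    assume "large_submodule R M S'"
    then have "S = S'" using large_submodule_iff_Min_sub[OF C S'sm(1)] S Min_sub_minimal[OF S'(1) Ssm(1)] Ssm(2)
      by blast
    then show False using S' ST by blast
  qed
  then have "S' \<in> ?V" using S'sm unfolding LS_vertices_def by blast
  moreover have "S' \<notin> {S, T}" using S'(2) ST by blast
  ultimately have "large_submodule R M (set_add M v S')"
    using nbrs vV v unfolding LS_adj_def by blast
  then have in_sum: "S'' \<subseteq> set_add M v S'" if "S'' \<in> Min_sub R M" for S''
    using that large_submodule_iff_Min_sub[OF C submodule_set_add[OF LS_verticesD(1)[OF vV] S'sm(1)]] by blast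
  have "S'' \<in> {S, S'}" if S'': "S'' \<in> Min_sub R M" for S''
  proof -
    have "S'' \<subseteq> v \<or> S'' \<subseteq> S'"
      using Min_sub_subset_set_addD[OF C S'' LS_verticesD(1)[OF vV] S'sm(1)] in_sum[OF S''] by blast
    then show ?thesis
    proof
      assume "S'' \<subseteq> v"
      then show ?thesis using Min_sub_subset_chain_eq[OF S T ST v nbrs S''] v ST by blast
    qed (use Min_sub_minimal[OF S'(1) Min_subD(1)[OF S''] _ Min_subD(2)[OF S'']] in blast)
  qed
  then have "Min_sub R M = {S, S'}" using S S'(1) by blast
  moreover have "S' \<noteq> S" using S'(2) ST by blast
  ultimately show ?thesis using that by blast
qed

lemma comultiplication_large_iff_Min_sub_pair:
  assumes "comultiplication_module R M" "Min_sub R M = {S, S'}" "submodule N R M"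
  shows "large_submodule R M N \<longleftrightarrow> S \<subseteq> N \<and> S' \<subseteq> N"
  using large_submodule_iff_Min_sub[OF assms(1,3)] assms(2) by blast

text \<open>The sum of two vertices containing A cannot contain B, by primality of B.\<close>

lemma comultiplication_LS_clique:
  assumes C: "comultiplication_module R M" and A: "A \<in> Min_sub R M" and B: "B \<in> Min_sub R M"
    and "A \<noteq> B" and large: "\<And>N. submodule N R M \<Longrightarrow> large_submodule R M N \<longleftrightarrow> A \<subseteq> N \<and> B \<subseteq> N"
  shows "A \<in> LS_vertices R M" "complete_on {X \<in> LS_vertices R M. A \<subseteq> X} (LS_adj R M)"
proof -
  let ?V = "LS_vertices R M"
  have out: "\<not> B \<subseteq> X" if "X \<in> ?V" "A \<subseteq> X" for X
    using that large[OF LS_verticesD(1)[OF that(1)]] LS_verticesD(3)[OF that(1)] by blast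
  have "\<not> B \<subseteq> A" using Min_sub_minimal[OF A Min_subD(1)[OF B] _ Min_subD(2)[OF B]] \<open>A \<noteq> B\<close> by blast
  then show "A \<in> ?V"
    using Min_subD[OF A] large[OF Min_subD(1)[OF A]] unfolding LS_vertices_def by blast
  show "complete_on {X \<in> ?V. A \<subseteq> X} (LS_adj R M)"
    unfolding complete_on_def
  proof (intro ballI impI)
    fix X Y assume X: "X \<in> {X \<in> ?V. A \<subseteq> X}" and Y: "Y \<in> {X \<in> ?V. A \<subseteq> X}" and "X \<noteq> Y"
    have Xsm: "submodule X R M" and Ysm: "submodule Y R M" using X Y LS_verticesD(1) by auto
    have "\<not> B \<subseteq> set_add M X Y"
      using Min_sub_subset_set_addD[OF C B Xsm Ysm] X Y out by blast
    then show "LS_adj R M X Y"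
      using X Y \<open>X \<noteq> Y\<close> large[OF submodule_set_add[OF Xsm Ysm]] unfolding LS_adj_def by blast
  qed
qed

lemma comultiplication_LS_two_complete_components:
  assumes C: "comultiplication_module R M" and Min: "Min_sub R M = {S, S'}" and "S \<noteq> S'"
  shows "two_complete_components (LS_vertices R M) (LS_adj R M)
           {X \<in> LS_vertices R M. S \<subseteq> X} {X \<in> LS_vertices R M. S' \<subseteq> X}"
proof -
  let ?V = "LS_vertices R M"
  note large = comultiplication_large_iff_Min_sub_pair[OF C Min]
  have S: "S \<in> Min_sub R M" and S': "S' \<in> Min_sub R M" using Min by auto
  have cliqueS: "S \<in> ?V" "complete_on {X \<in> ?V. S \<subseteq> X} (LS_adj R M)"
    using comultiplication_LS_clique[OF C S S' \<open>S \<noteq> S'\<close>] large by blast+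
  have cliqueS': "S' \<in> ?V" "complete_on {X \<in> ?V. S' \<subseteq> X} (LS_adj R M)"
    using comultiplication_LS_clique[OF C S' S \<open>S \<noteq> S'\<close>[symmetric]] large by blast+
  have no_edge: "\<not> LS_adj R M X Y" if "X \<in> ?V" "Y \<in> ?V" "S \<subseteq> X" "S' \<subseteq> Y" for X Y
  proof -
    have Xsm: "submodule X R M" and Ysm: "submodule Y R M" using that LS_verticesD(1) by auto
    have "S \<subseteq> set_add M X Y" "S' \<subseteq> set_add M X Y"
      using that(3,4) set_add_upper1[OF submoduleE(1)[OF Xsm] Ysm] set_add_upper2[OF Xsm submoduleE(1)[OF Ysm]]
      by auto
    then show ?thesis using large[OF submodule_set_add[OF Xsm Ysm]] unfolding LS_adj_def by blast
  qed
  have cover: "S \<subseteq> X \<or> S' \<subseteq> X" if "X \<in> ?V" for X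
    using comultiplication_exists_Min_sub[OF C LS_verticesD(1,2)[OF that]] Min by blast
  have disjoint: "\<not> (S \<subseteq> X \<and> S' \<subseteq> X)" if "X \<in> ?V" for X
    using large[OF LS_verticesD(1)[OF that]] LS_verticesD(3)[OF that] by blast
  show ?thesis
    unfolding two_complete_components_def
  proof (intro conjI)
    show "{X \<in> ?V. S \<subseteq> X} \<noteq> {}" "{X \<in> ?V. S' \<subseteq> X} \<noteq> {}" using cliqueS(1) cliqueS'(1) by auto
    show "{X \<in> ?V. S \<subseteq> X} \<inter> {X \<in> ?V. S' \<subseteq> X} = {}" using disjoint by blast
    show "{X \<in> ?V. S \<subseteq> X} \<union> {X \<in> ?V. S' \<subseteq> X} = ?V" using cover by blast
    show "complete_on {X \<in> ?V. S \<subseteq> X} (LS_adj R M)" "complete_on {X \<in> ?V. S' \<subseteq> X} (LS_adj R M)"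
      using cliqueS(2) cliqueS'(2) .
    show "\<forall>X\<in>{X \<in> ?V. S \<subseteq> X}. \<forall>Y\<in>{X \<in> ?V. S' \<subseteq> X}. \<not> LS_adj R M X Y \<and> \<not> LS_adj R M Y X"
      using no_edge LS_adj_sym by blast
  qed
qed


lemma pendent_vertex_LS_two_cliques:
  assumes C: "comultiplication_module R M" and "pendent_vertex (LS_vertices R M) (LS_adj R M) v"
  shows "card (Min_sub R M) = 2 \<and>
    (\<exists>V1 V2. two_complete_components (LS_vertices R M) (LS_adj R M) V1 V2 \<and> (card V1 = 2 \<or> card V2 = 2))"
proof -
  let ?V = "LS_vertices R M"
  obtain S T where S: "S \<in> Min_sub R M" and T: "T \<in> ?V" and "S \<subset> T" and v: "v \<in> {S, T}"
    and nbrs: "\<And>X. X \<in> ?V \<Longrightarrow> LS_adj R M v X \<Longrightarrow> X \<in> {S, T}"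
    using pendent_vertex_LS_chain[OF assms(2)] by blast
  obtain S' where "S' \<noteq> S" and Min: "Min_sub R M = {S, S'}"
    using comultiplication_Min_sub_pair[OF C S T \<open>S \<subset> T\<close> v nbrs] by blast
  note components = comultiplication_LS_two_complete_components[OF C Min \<open>S' \<noteq> S\<close>[symmetric]]
  have "S \<in> ?V" using LS_vertices_subset[OF T Min_subD(1)[OF S] _ Min_subD(2)[OF S]] \<open>S \<subset> T\<close> by blast
  have "{X \<in> ?V. S \<subseteq> X} = {S, T}"
  proof
    show "{S, T} \<subseteq> {X \<in> ?V. S \<subseteq> X}" using \<open>S \<in> ?V\<close> T \<open>S \<subset> T\<close> by blast
    show "{X \<in> ?V. S \<subseteq> X} \<subseteq> {S, T}"
    proof
      fix X assume X: "X \<in> {X \<in> ?V. S \<subseteq> X}"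
      have "v \<in> {X \<in> ?V. S \<subseteq> X}" using v \<open>S \<in> ?V\<close> T \<open>S \<subset> T\<close> by blast
      moreover have "complete_on {X \<in> ?V. S \<subseteq> X} (LS_adj R M)"
        using components unfolding two_complete_components_def by blast
      ultimately have "X = v \<or> LS_adj R M v X" using X unfolding complete_on_def by blast
      then show "X \<in> {S, T}" using nbrs v X by blast
    qed
  qed
  then have "card {X \<in> ?V. S \<subseteq> X} = 2" using \<open>S \<subset> T\<close> by simp
  moreover have "card (Min_sub R M) = 2" using Min \<open>S' \<noteq> S\<close> by simp
  ultimately show ?thesis using components by blast
qed
end

lemma pendent_vertex_if_two_complete_components:
  assumes "two_complete_components V E V1 V2" and "card V1 = 2 \<or> card V2 = 2"
    and irrefl: "\<And>x. \<not> E x x"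
  shows "\<exists>v. pendent_vertex V E v"
proof -
  have "\<exists>v. pendent_vertex V E v" if AB: "two_complete_components V E A B" "card A = 2" for A B
  proof -
    obtain a b where ab: "A = {a, b}" "a \<noteq> b" using AB(2) unfolding card_2_iff by blast
    have "a \<in> V" "b \<in> V" "E a b" and no_edge: "\<forall>y\<in>V - A. \<not> E a y"
      using AB(1) ab unfolding two_complete_components_def complete_on_def by blast+
    then have "pendent_vertex V E a"
      unfolding pendent_vertex_def using ab irrefl by blast
    then show ?thesis by blast
  qed
  moreover have "two_complete_components V E V2 V1"
    using assms(1) unfolding two_complete_components_def by blast
  ultimately show ?thesis using assms by blast
qed

theorem theorem2p12:
  fixes R :: "('a, 'b) ring_scheme" and M :: "('a, 'c, 'd) module_scheme"
  assumes "cring R" and "module R M"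
    and "carrier M \<noteq> {\<zero>\<^bsub>M\<^esub>}"
    and "comultiplication_module R M"
    and "non_null_graph (LS_vertices R M)"
  shows "((\<exists>v. pendent_vertex (LS_vertices R M) (LS_adj R M) v) \<longleftrightarrow>
           card (Min_sub R M) = 2 \<and>
           (\<exists>V1 V2. two_complete_components (LS_vertices R M) (LS_adj R M) V1 V2 \<and>
                    (card V1 = 2 \<or> card V2 = 2)))
       \<and> \<not> star_graph (LS_vertices R M) (LS_adj R M)"
proof -
  have irrefl: "\<And>X. \<not> LS_adj R M X X" unfolding LS_adj_def by blast
  show ?thesis
    using module.pendent_vertex_LS_two_cliques[OF assms(2,4)] module.LS_not_star_graph[OF assms(2)]
      pendent_vertex_if_two_complete_components[where E = "LS_adj R M", OF _ _ irrefl]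
    by blast
qed

end
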